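(* Let $\epsilon\in(0,1/2)$, $\eta=(A,D)\in(\epsilon,1-\epsilon)^{2p}$, $\xi,\omega,\zeta\in(\epsilon,1-\epsilon)$, and let $\pi$ be an everywhere positive probability mass function on $\Gamma=\{0,1\}^p$. If $\zeta=\xi\omega$, then $$p^{\mathrm{ARN}}_{(\xi\eta,\omega)}(\gamma,\gamma')=p^{\mathrm{ASI}}_{\zeta\eta}(\gamma,\gamma')\quad\text{for all }\gamma,\gamma'\in\Gamma.$$
   Context: $\Gamma=\{0,1\}^p$, $d_H$ is Hamming distance, $c\eta=(cA,cD)$ for scalar $c$. Neighbourhood indicator distribution: $p^{\mathrm{RN}}_{\xi\eta}(k\mid\gamma)=\prod_j p_j(k_j\mid\gamma_j)$, $k\in\{0,1\}^p$, with $p_j(1\mid0)=\xi A_j$, $p_j(0\mid0)=1-\xi A_j$, $p_j(1\mid1)=\xi D_j$, $p_j(0\mid1)=1-\xi D_j$. $N(\gamma,k)=\{\gamma^*:\gamma^*_j=\gamma_j\ \forall j\text{ with }k_j=0\}$, $p_k=\sum_jk_j$, $q^{\mathrm{THIN}}_{\omega,k}(\gamma,\gamma')=\omega^{d_H(\gamma,\gamma')}(1-\omega)^{p_k-d_H(\gamma,\gamma')}\mathbb{I}\{\gamma'\in N(\gamma,k)\}$. ARN acceptance $\alpha^{\mathrm{ARN}}_{(\xi\eta,\omega),k}(\gamma,\gamma')=\min\{1,\frac{\pi(\gamma')p^{\mathrm{RN}}_{\xi\eta}(k\mid\gamma')q^{\mathrm{THIN}}_{\omega,k}(\gamma',\gamma)}{\pi(\gamma)p^{\mathrm{RN}}_{\xi\eta}(k\mid\gamma)q^{\mathrm{THIN}}_{\omega,k}(\gamma,\gamma')}\}$.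 ARN transition kernel: for $\gamma'\neq\gamma$, $p^{\mathrm{ARN}}_{(\xi\eta,\omega)}(\gamma,\gamma')=\sum_{k\in\{0,1\}^p}p^{\mathrm{RN}}_{\xi\eta}(k\mid\gamma)q^{\mathrm{THIN}}_{\omega,k}(\gamma,\gamma')\alpha^{\mathrm{ARN}}_{(\xi\eta,\omega),k}(\gamma,\gamma')$, and $p^{\mathrm{ARN}}(\gamma,\gamma)=1-\sum_{\gamma'\ne\gamma}p^{\mathrm{ARN}}(\gamma,\gamma')$. ASI proposal $q^{\mathrm{ASI}}_{\zeta\eta}(\gamma,\gamma')=\prod_jq_j(\gamma_j,\gamma'_j)$ with $q_j(0,1)=\zeta A_j$, $q_j(0,0)=1-\zeta A_j$, $q_j(1,0)=\zeta D_j$, $q_j(1,1)=1-\zeta D_j$; acceptance $\alpha^{\mathrm{ASI}}_{\zeta\eta}=\min\{1,\frac{\pi(\gamma')q^{\mathrm{ASI}}_{\zeta\eta}(\gamma',\gamma)}{\pi(\gamma)q^{\mathrm{ASI}}_{\zeta\eta}(\gamma,\gamma')}\}$; ASI kernel $p^{\mathrm{ASI}}_{\zeta\eta}(\gamma,\gamma')=q^{\mathrm{ASI}}_{\zeta\eta}(\gamma,\gamma')\alpha^{\mathrm{ASI}}_{\zeta\eta}(\gamma,\gamma')$ for $\gamma'\ne\gamma$ and $p^{\mathrm{ASI}}(\gamma,\gamma)=1-\sum_{\gamma'\ne\gamma}p^{\mathrm{ASI}}(\gamma,\gamma')$. *)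

theory Defs
  imports Complex_Main
begin

text \<open>Models gamma in Gamma = {0,1}^p are functions 'n => bool over a finite index
type 'n with CARD('n) = p; True encodes 1.  Vectors A, D are functions 'n => real.\<close>

definition dH :: "('n::finite \<Rightarrow> bool) \<Rightarrow> ('n \<Rightarrow> bool) \<Rightarrow> nat" where
  "dH g g' = card {j. g j \<noteq> g' j}"

definition pRN :: "real \<Rightarrow> ('n::finite \<Rightarrow> real) \<Rightarrow> ('n \<Rightarrow> real)
    \<Rightarrow> ('n \<Rightarrow> bool) \<Rightarrow> ('n \<Rightarrow> bool) \<Rightarrow> real" where
  "pRN xi A D k g = (\<Prod>j\<in>UNIV.
     (if g j then (if k j then xi * D j else 1 - xi * D j)
             else (if k j then xi * A j else 1 - xi * A j)))"

definition nbhd :: "('n::finite \<Rightarrow> bool) \<Rightarrow> ('n \<Rightarrow> bool) \<Rightarrow> ('n \<Rightarrow> bool) set" where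
  "nbhd g k = {g'. \<forall>j. \<not> k j \<longrightarrow> g' j = g j}"

definition pk :: "('n::finite \<Rightarrow> bool) \<Rightarrow> nat" where
  "pk k = card {j. k j}"

definition qTHIN :: "real \<Rightarrow> ('n::finite \<Rightarrow> bool) \<Rightarrow> ('n \<Rightarrow> bool) \<Rightarrow> ('n \<Rightarrow> bool) \<Rightarrow> real" where
  "qTHIN om k g g' = om ^ dH g g' * (1 - om) ^ (pk k - dH g g')
      * (if g' \<in> nbhd g k then 1 else 0)"

definition alphaARN :: "(('n::finite \<Rightarrow> bool) \<Rightarrow> real) \<Rightarrow> real \<Rightarrow> ('n \<Rightarrow> real) \<Rightarrow> ('n \<Rightarrow> real)
    \<Rightarrow> real \<Rightarrow> ('n \<Rightarrow> bool) \<Rightarrow> ('n \<Rightarrow> bool) \<Rightarrow> ('n \<Rightarrow> bool) \<Rightarrow> real" where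
  "alphaARN pm xi A D om k g g' = min 1
     ((pm g' * pRN xi A D k g' * qTHIN om k g' g) / (pm g * pRN xi A D k g * qTHIN om k g g'))"

definition pARN_off :: "(('n::finite \<Rightarrow> bool) \<Rightarrow> real) \<Rightarrow> real \<Rightarrow> ('n \<Rightarrow> real) \<Rightarrow> ('n \<Rightarrow> real)
    \<Rightarrow> real \<Rightarrow> ('n \<Rightarrow> bool) \<Rightarrow> ('n \<Rightarrow> bool) \<Rightarrow> real" where
  "pARN_off pm xi A D om g g' =
     (\<Sum>k\<in>UNIV. pRN xi A D k g * qTHIN om k g g' * alphaARN pm xi A D om k g g')"

definition pARN :: "(('n::finite \<Rightarrow> bool) \<Rightarrow> real) \<Rightarrow> real \<Rightarrow> ('n \<Rightarrow> real) \<Rightarrow> ('n \<Rightarrow> real)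
    \<Rightarrow> real \<Rightarrow> ('n \<Rightarrow> bool) \<Rightarrow> ('n \<Rightarrow> bool) \<Rightarrow> real" where
  "pARN pm xi A D om g g' =
     (if g' \<noteq> g then pARN_off pm xi A D om g g'
      else 1 - (\<Sum>g''\<in>UNIV - {g}. pARN_off pm xi A D om g g''))"

definition qASI :: "real \<Rightarrow> ('n::finite \<Rightarrow> real) \<Rightarrow> ('n \<Rightarrow> real)
    \<Rightarrow> ('n \<Rightarrow> bool) \<Rightarrow> ('n \<Rightarrow> bool) \<Rightarrow> real" where
  "qASI ze A D g g' = (\<Prod>j\<in>UNIV.
     (if g j then (if g' j then 1 - ze * D j else ze * D j)
             else (if g' j then ze * A j else 1 - ze * A j)))"

definition alphaASI :: "(('n::finite \<Rightarrow> bool) \<Rightarrow> real) \<Rightarrow> real \<Rightarrow> ('n \<Rightarrow> real) \<Rightarrow> ('n \<Rightarrow> real)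
    \<Rightarrow> ('n \<Rightarrow> bool) \<Rightarrow> ('n \<Rightarrow> bool) \<Rightarrow> real" where
  "alphaASI pm ze A D g g' = min 1
     ((pm g' * qASI ze A D g' g) / (pm g * qASI ze A D g g'))"

definition pASI_off :: "(('n::finite \<Rightarrow> bool) \<Rightarrow> real) \<Rightarrow> real \<Rightarrow> ('n \<Rightarrow> real) \<Rightarrow> ('n \<Rightarrow> real)
    \<Rightarrow> ('n \<Rightarrow> bool) \<Rightarrow> ('n \<Rightarrow> bool) \<Rightarrow> real" where
  "pASI_off pm ze A D g g' = qASI ze A D g g' * alphaASI pm ze A D g g'"

definition pASI :: "(('n::finite \<Rightarrow> bool) \<Rightarrow> real) \<Rightarrow> real \<Rightarrow> ('n \<Rightarrow> real) \<Rightarrow> ('n \<Rightarrow> real)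
    \<Rightarrow> ('n \<Rightarrow> bool) \<Rightarrow> ('n \<Rightarrow> bool) \<Rightarrow> real" where
  "pASI pm ze A D g g' =
     (if g' \<noteq> g then pASI_off pm ze A D g g'
      else 1 - (\<Sum>g''\<in>UNIV - {g}. pASI_off pm ze A D g g''))"

end

theory Submission
  imports Defs "HOL-Library.FuncSet"
begin

text \<open>Summing the ARN proposal over the neighbourhood indicator k factorises coordinatewise:
  coordinate j contributes \<xi> \<omega> A j (or \<xi> \<omega> D j) to a flip and the complementary mass to
  staying put, which is exactly the ASI proposal with \<zeta> = \<xi>\<omega>. Moreover, for every k whose
  neighbourhood contains both states, the thinning kernel is symmetric and the ratio of
  indicator probabilities equals the ratio of reverse and forward ASI proposals, so the ARN
  acceptance probability does not depend on k and coincides with the ASI one.\<close>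

lemma sum_prod_bool_fun:
  fixes f :: "'n::finite \<Rightarrow> bool \<Rightarrow> 'a::comm_semiring_1"
  shows "(\<Sum>k\<in>UNIV. \<Prod>j\<in>UNIV. f j (k j)) = (\<Prod>j\<in>UNIV. f j True + f j False)"
proof -
  have "(\<Prod>j\<in>UNIV. \<Sum>b\<in>UNIV. f j b) = (\<Sum>k\<in>PiE UNIV (\<lambda>_. UNIV). \<Prod>j\<in>UNIV. f j (k j))"
    by (rule prod_sum_PiE) auto
  moreover have "(\<Sum>b\<in>UNIV. f j b) = f j True + f j False" for j
    by (simp add: UNIV_bool add.commute)
  ultimately show ?thesis
    by simp
qed

lemma qTHIN_eq_prod:
  "qTHIN om k g g' = (\<Prod>j\<in>UNIV. if g j \<noteq> g' j then (if k j then om else 0)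
                                 else (if k j then 1 - om else 1))"
proof -
  define S where "S = {j. g j \<noteq> g' j}"
  define K where "K = {j. k j}"
  show ?thesis
  proof (cases "S \<subseteq> K")
    case True
    have "(\<Prod>j\<in>UNIV. if g j \<noteq> g' j then (if k j then om else 0)
                                 else (if k j then 1 - om else 1))
        = (\<Prod>j\<in>UNIV. (if j \<in> S then om else 1) * (if j \<in> K - S then 1 - om else 1))"
      using True unfolding S_def K_def by (intro prod.cong) auto
    also have "\<dots> = (\<Prod>j\<in>UNIV. if j \<in> S then om else 1) * (\<Prod>j\<in>UNIV. if j \<in> K - S then 1 - om else 1)"
      by (rule prod.distrib)
    also have "(\<Prod>j\<in>UNIV. if j \<in> S then om else 1) = om ^ card S"
      by (simp add: prod.If_cases flip: prod_constant)
    also have "(\<Prod>j\<in>UNIV. if j \<in> K - S then 1 - om else 1) = (1 - om) ^ card (K - S)"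
      by (simp add: prod.If_cases set_diff_eq flip: prod_constant)
    also have "card (K - S) = card K - card S"
      using True by (simp add: card_Diff_subset)
    finally show ?thesis
      using True unfolding qTHIN_def dH_def pk_def nbhd_def S_def K_def by auto
  next
    case False
    then obtain j where "g j \<noteq> g' j" "\<not> k j"
      unfolding S_def K_def by auto
    then show ?thesis
      unfolding qTHIN_def nbhd_def by (auto intro: prod_zero)
  qed
qed

lemma qTHIN_commute: "qTHIN om k g' g = qTHIN om k g g'"
  unfolding qTHIN_eq_prod by (intro prod.cong) auto

lemma qTHIN_nonzero_imp_flips_marked:
  assumes "qTHIN om k g g' \<noteq> 0" and "g j \<noteq> g' j"
  shows "k j"
  using assms unfolding qTHIN_def nbhd_def by (auto split: if_splits)

lemma sum_pRN_qTHIN_eq_qASI: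
  "(\<Sum>k\<in>UNIV. pRN xi A D k g * qTHIN om k g g') = qASI (xi * om) A D g g'"
proof -
  let ?F = "\<lambda>j b. (if g j then (if b then xi * D j else 1 - xi * D j)
                   else (if b then xi * A j else 1 - xi * A j)) *
                 (if g j \<noteq> g' j then (if b then om else 0) else (if b then 1 - om else 1))"
  have "(\<Sum>k\<in>UNIV. pRN xi A D k g * qTHIN om k g g') = (\<Sum>k\<in>UNIV. \<Prod>j\<in>UNIV. ?F j (k j))"
    unfolding pRN_def qTHIN_eq_prod prod.distrib ..
  also have "\<dots> = (\<Prod>j\<in>UNIV. ?F j True + ?F j False)"
    by (rule sum_prod_bool_fun)
  also have "\<dots> = qASI (xi * om) A D g g'"
    unfolding qASI_def by (intro prod.cong) (auto simp: algebra_simps)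
  finally show ?thesis .
qed

lemma pRN_qASI_balance:
  assumes "\<And>j. g j \<noteq> g' j \<Longrightarrow> k j"
  shows "pRN xi A D k g' * qASI ze A D g g' = qASI ze A D g' g * pRN xi A D k g"
  unfolding pRN_def qASI_def prod.distrib [symmetric]
  using assms by (intro prod.cong) auto

lemma alphaARN_eq_alphaASI:
  assumes "qTHIN om k g g' \<noteq> 0"
    and "pm g \<noteq> 0" "pRN xi A D k g \<noteq> 0" "qASI ze A D g g' \<noteq> 0"
  shows "alphaARN pm xi A D om k g g' = alphaASI pm ze A D g g'"
proof -
  have "pRN xi A D k g' * qASI ze A D g g' = qASI ze A D g' g * pRN xi A D k g"
    using qTHIN_nonzero_imp_flips_marked [OF assms(1)] by (rule pRN_qASI_balance)
  then have ratio: "pRN xi A D k g' / pRN xi A D k g = qASI ze A D g' g / qASI ze A D g g'"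
    using assms(3,4) by (simp add: frac_eq_eq)
  have cancel_qTHIN: "pm g' * x * qTHIN om k g g' / (pm g * y * qTHIN om k g g') = pm g' / pm g * (x / y)"
    for x y :: real
    using assms(1) by simp
  have split_pm: "pm g' * x / (pm g * y) = pm g' / pm g * (x / y)" for x y :: real
    by simp
  show ?thesis
    unfolding alphaARN_def alphaASI_def qTHIN_commute [of om k g' g]
    by (simp only: cancel_qTHIN split_pm ratio)
qed

lemma mult_in_open_unit_interval:
  fixes c a :: real
  assumes "0 < c" "c \<le> 1" "0 < a" "a < 1"
  shows "0 < c * a" "c * a < 1"
proof -
  show "0 < c * a"
    using assms by simp
  show "c * a < 1"
    using assms mult_left_le_one_le [of a c] by linarith
qed

lemma pRN_pos:
  assumes "0 < xi" "xi \<le> 1" "\<And>j. 0 < A j \<and> A j < 1" "\<And>j. 0 < D j \<and> D j < 1"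
  shows "0 < pRN xi A D k g"
  unfolding pRN_def
  using assms mult_in_open_unit_interval [of xi] by (intro prod_pos) auto

lemma qASI_pos:
  assumes "0 < ze" "ze \<le> 1" "\<And>j. 0 < A j \<and> A j < 1" "\<And>j. 0 < D j \<and> D j < 1"
  shows "0 < qASI ze A D g g'"
  unfolding qASI_def
  using assms mult_in_open_unit_interval [of ze] by (intro prod_pos) auto

lemma pARN_off_eq_pASI_off:
  assumes "0 < xi" "xi \<le> 1" "0 < om" "om \<le> 1"
    and "\<And>j. 0 < A j \<and> A j < 1" "\<And>j. 0 < D j \<and> D j < 1"
    and "pm g \<noteq> 0"
  shows "pARN_off pm xi A D om g g' = pASI_off pm (xi * om) A D g g'"
proof -
  have "0 < xi * om" "xi * om \<le> 1"
    using assms(1-4) mult_le_one [of xi om] by auto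
  then have "0 < qASI (xi * om) A D g g'"
    using assms(5,6) by (intro qASI_pos) auto
  then have qASI_nonzero: "qASI (xi * om) A D g g' \<noteq> 0"
    by simp
  have "0 < pRN xi A D k g" for k
    using assms(1,2,5,6) by (intro pRN_pos) auto
  then have pRN_nonzero: "pRN xi A D k g \<noteq> 0" for k
    by (simp add: less_imp_neq [symmetric])
  have summand_eq: "pRN xi A D k g * qTHIN om k g g' * alphaARN pm xi A D om k g g'
      = pRN xi A D k g * qTHIN om k g g' * alphaASI pm (xi * om) A D g g'" for k
    using alphaARN_eq_alphaASI [of om k g g' pm, OF _ assms(7) pRN_nonzero qASI_nonzero]
    by (cases "qTHIN om k g g' = 0") auto
  have "pARN_off pm xi A D om g g'
      = (\<Sum>k\<in>UNIV. pRN xi A D k g * qTHIN om k g g') * alphaASI pm (xi * om) A D g g'"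
    unfolding pARN_off_def summand_eq sum_distrib_right ..
  then show ?thesis
    unfolding pASI_off_def sum_pRN_qTHIN_eq_qASI .
qed

theorem theorem1:
  fixes eps xi om ze :: real
    and A D :: "'n::finite \<Rightarrow> real"
    and pm :: "('n \<Rightarrow> bool) \<Rightarrow> real"
  assumes "0 < eps" "eps < 1/2"
    and "\<forall>j. eps < A j \<and> A j < 1 - eps"
    and "\<forall>j. eps < D j \<and> D j < 1 - eps"
    and "eps < xi" "xi < 1 - eps"
    and "eps < om" "om < 1 - eps"
    and "eps < ze" "ze < 1 - eps"
    and "\<forall>g. 0 < pm g" "(\<Sum>g\<in>UNIV. pm g) = 1"
    and "ze = xi * om"
  shows "\<forall>g g'. pARN pm xi A D om g g' = pASI pm ze A D g g'"
proof -
  have "\<And>j. 0 < A j \<and> A j < 1" "\<And>j. 0 < D j \<and> D j < 1"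
    using assms(1,3,4) by (smt (verit))+
  moreover have "0 < xi" "xi \<le> 1" "0 < om" "om \<le> 1"
    using assms(1,5-8) by auto
  ultimately have "pARN_off pm xi A D om g g' = pASI_off pm ze A D g g'" for g g'
    using assms(11,13) by (simp add: pARN_off_eq_pASI_off less_imp_neq [symmetric])
  then show ?thesis
    unfolding pARN_def pASI_def by simp
qed

end
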